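(* Let $\rho>0$. There is a constant $C>0$ such that for every $\varepsilon>0$ and every $\xi\in\mathbb{H}^N$ with $|\xi|>\rho$, $$|\nabla_{\mathbb{H}}u_\varepsilon(\xi)|\le C\varepsilon^{\frac{Q-2s}{2}}.$$
   Context: $\mathbb{H}^N=\mathbb{R}^{2N+1}$ with group law $\xi\circ\xi'=(x+x',y+y',t+t'+2(x'\cdot y-y'\cdot x))$, $Q=2N+2$, dilations $\delta_a(x,y,t)=(ax,ay,a^2t)$, homogeneous norm $|\xi|=((|x|^2+|y|^2)^2+t^2)^{1/4}$, balls $B_r(0)=\{|\xi|<r\}$, $s\in(0,1)$, $Q^*_s=\frac{2Q}{Q-2s}$. The horizontal gradient is $\nabla_{\mathbb{H}}u=(X_1u,\dots,X_Nu,Y_1u,\dots,Y_Nu)$ with $X_j=\partial_{x_j}+2y_j\partial_t$, $Y_j=\partial_{y_j}-2x_j\partial_t$. $S_s>0$ is the sharp fractional Sobolev constant on $\mathbb{H}^N$. $U(x,y,t)=C_0(t^2+(1+|x|^2+|y|^2)^2)^{-\frac{Q-2s}{4}}$ ($C_0>0$), $\overline{u}=U/\|U\|_{L^{Q^*_s}(\mathbb{H}^N)}$, $u^*(\xi)=\overline{u}(\delta_{S_s^{-1/(2s)}}(\xi))$, $U_\varepsilon(\xi)=\varepsilon^{-\frac{Q-2s}{2}}u^*(\delta_{1/\varepsilon}(\xi))$. $\Omega\subseteq\mathbb{H}^N$ is bounded open, $r>0$ with $B_{4r}(0)\subset\Omega$, $\phi\in C^\infty(\mathbb{H}^N)$,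 $0\le\phi\le1$, $\phi=1$ on $B_r(0)$, $\phi=0$ outside $B_{2r}(0)$, and $u_\varepsilon=U_\varepsilon\phi$. *)

theory Defs
  imports "HOL-Analysis.Analysis"
begin

text \<open>Heisenberg group H^N = R^{2N+1}, points (x,y,t) with x,y :: real^'n, N = CARD('n).\<close>

type_synonym 'n heis = "(real^'n) \<times> (real^'n) \<times> real"

definition hQ :: "'n::finite itself \<Rightarrow> real" where
  "hQ _ = 2 * real CARD('n) + 2"

definition hmult :: "'n::finite heis \<Rightarrow> 'n heis \<Rightarrow> 'n heis" where
  "hmult p q = (case p of (x,y,t) \<Rightarrow> case q of (x',y',t') \<Rightarrow>
      (x + x', y + y', t + t' + 2 * (x' \<bullet> y - y' \<bullet> x)))"

definition hinv :: "'n::finite heis \<Rightarrow> 'n heis" where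
  "hinv p = (case p of (x,y,t) \<Rightarrow> (-x, -y, -t))"

definition hdil :: "real \<Rightarrow> 'n::finite heis \<Rightarrow> 'n heis" where
  "hdil a p = (case p of (x,y,t) \<Rightarrow> (a *\<^sub>R x, a *\<^sub>R y, a^2 * t))"

definition hnorm :: "'n::finite heis \<Rightarrow> real" where
  "hnorm p = (case p of (x,y,t) \<Rightarrow> ((norm x ^ 2 + norm y ^ 2) ^ 2 + t ^ 2) powr (1/4))"

definition hball :: "real \<Rightarrow> 'n::finite heis set" where
  "hball r = {p. hnorm p < r}"

definition crit_exp :: "'n::finite itself \<Rightarrow> real \<Rightarrow> real" where
  "crit_exp n s = 2 * hQ n / (hQ n - 2 * s)"

definition Lp_norm :: "real \<Rightarrow> ('n::finite heis \<Rightarrow> real) \<Rightarrow> real" where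
  "Lp_norm p u = enn2real (\<integral>\<^sup>+ \<xi>. ennreal (\<bar>u \<xi>\<bar> powr p) \<partial>lborel) powr (1/p)"

definition gagliardo :: "real \<Rightarrow> ('n::finite heis \<Rightarrow> real) \<Rightarrow> ennreal" where
  "gagliardo s u = (\<integral>\<^sup>+ \<xi>. \<integral>\<^sup>+ \<eta>.
      ennreal ((u \<xi> - u \<eta>)^2 / hnorm (hmult (hinv \<eta>) \<xi>) powr (hQ TYPE('n) + 2 * s)) \<partial>lborel \<partial>lborel)"

definition sobolev_const :: "'n::finite itself \<Rightarrow> real \<Rightarrow> real" where
  "sobolev_const n s = Inf {enn2real (gagliardo s u) / (Lp_norm (crit_exp n s) u)^2 | u :: 'n heis \<Rightarrow> real.
      u \<in> borel_measurable lborel \<and> gagliardo s u < \<infinity> \<and>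
      (\<integral>\<^sup>+ \<xi>. ennreal (\<bar>u \<xi>\<bar> powr crit_exp n s) \<partial>lborel) < \<infinity> \<and>
      (\<integral>\<^sup>+ \<xi>. ennreal (\<bar>u \<xi>\<bar> powr crit_exp n s) \<partial>lborel) > 0}"

definition bubble_U :: "real \<Rightarrow> real \<Rightarrow> 'n::finite heis \<Rightarrow> real" where
  "bubble_U C0 s p = (case p of (x,y,t) \<Rightarrow>
      C0 * (t^2 + (1 + norm x ^ 2 + norm y ^ 2)^2) powr (- (hQ TYPE('n) - 2 * s) / 4))"

definition u_bar :: "real \<Rightarrow> real \<Rightarrow> 'n::finite heis \<Rightarrow> real" where
  "u_bar C0 s p = bubble_U C0 s p / Lp_norm (crit_exp TYPE('n) s) (bubble_U C0 s :: 'n heis \<Rightarrow> real)"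

definition u_star :: "real \<Rightarrow> real \<Rightarrow> 'n::finite heis \<Rightarrow> real" where
  "u_star C0 s p = u_bar C0 s (hdil (sobolev_const TYPE('n) s powr (- 1 / (2 * s))) p)"

definition U_eps :: "real \<Rightarrow> real \<Rightarrow> real \<Rightarrow> 'n::finite heis \<Rightarrow> real" where
  "U_eps C0 s \<epsilon> p = \<epsilon> powr (- (hQ TYPE('n) - 2 * s) / 2) * u_star C0 s (hdil (1/\<epsilon>) p)"

definition hX :: "'n::finite \<Rightarrow> ('n heis \<Rightarrow> real) \<Rightarrow> 'n heis \<Rightarrow> real" where
  "hX j u p = (case p of (x,y,t) \<Rightarrow>
      frechet_derivative u (at p) (axis j 1, 0, 2 * y $ j))"

definition hY :: "'n::finite \<Rightarrow> ('n heis \<Rightarrow> real) \<Rightarrow> 'n heis \<Rightarrow> real" where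
  "hY j u p = (case p of (x,y,t) \<Rightarrow>
      frechet_derivative u (at p) (0, axis j 1, - 2 * x $ j))"

definition hgrad_norm :: "('n::finite heis \<Rightarrow> real) \<Rightarrow> 'n heis \<Rightarrow> real" where
  "hgrad_norm u p = sqrt (\<Sum>j\<in>UNIV. (hX j u p)^2 + (hY j u p)^2)"

fun iter_deriv :: "'a::real_normed_vector list \<Rightarrow> ('a \<Rightarrow> real) \<Rightarrow> 'a \<Rightarrow> real" where
  "iter_deriv [] f = f"
| "iter_deriv (v # vs) f = (\<lambda>x. frechet_derivative (iter_deriv vs f) (at x) v)"

definition smooth_fun :: "('a::real_normed_vector \<Rightarrow> real) \<Rightarrow> bool" where
  "smooth_fun f \<longleftrightarrow> (\<forall>vs x. iter_deriv vs f differentiable (at x))"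

end

theory Submission
  imports Defs
begin

(* Unwinding the dilations, U_eps = K eps^a D^(-a/2) with a = (Q - 2s)/2, l = S_s^(-1/(2s)) and
   D = l^4 t^2 + (eps^2 + l^2 |z|^2)^2, where z = (x, y).  Since D >= (l |xi|)^4, the factor
   D^(-a/2) is bounded by (l rho)^(-2a) on {|xi| > rho}, uniformly in eps.  Its horizontal
   gradient is controlled as well, because |grad_H D| = 4 l^2 |z| sqrt D <= 4 l D^(3/4).  The
   cutoff phi is smooth with bounded support, so |grad_H phi| is bounded, and the product rule
   for grad_H finishes the proof. *)

lemma smooth_fun_differentiable: "smooth_fun f \<Longrightarrow> f differentiable (at x)"
  unfolding smooth_fun_def by (metis iter_deriv.simps(1))

lemma smooth_fun_continuous_on_directional_derivative:
  assumes "smooth_fun f"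
  shows "continuous_on UNIV (\<lambda>x. frechet_derivative f (at x) v)"
proof -
  have "iter_deriv [v] f differentiable (at x)" for x
    using assms unfolding smooth_fun_def by blast
  then show ?thesis
    by (simp add: differentiable_at_imp_differentiable_on differentiable_imp_continuous_on)
qed

lemma continuous_on_frechet_derivative_apply:
  fixes f :: "'a::euclidean_space \<Rightarrow> real"
  assumes diff: "\<And>x. f differentiable (at x)"
    and cont: "\<And>v. continuous_on UNIV (\<lambda>x. frechet_derivative f (at x) v)"
    and V: "continuous_on UNIV V"
  shows "continuous_on UNIV (\<lambda>x. frechet_derivative f (at x) (V x))"
proof -
  have "frechet_derivative f (at x) (V x) = (\<Sum>b\<in>Basis. (V x \<bullet> b) * frechet_derivative f (at x) b)" for x
  proof -
    have lin: "linear (frechet_derivative f (at x))"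
      using diff by (rule linear_frechet_derivative)
    have "frechet_derivative f (at x) (V x) = frechet_derivative f (at x) (\<Sum>b\<in>Basis. (V x \<bullet> b) *\<^sub>R b)"
      by (simp add: euclidean_representation)
    then show ?thesis
      by (simp add: linear_sum[OF lin] linear_scale[OF lin])
  qed
  then show ?thesis
    by (simp only:) (intro continuous_intros cont V)
qed

lemma frechet_derivative_eq_0_outside_closure:
  assumes "\<And>y. y \<notin> S \<Longrightarrow> f y = 0" "x \<notin> closure S"
  shows "frechet_derivative f (at x) = (\<lambda>_. 0)"
proof -
  have "open (- closure S)" "x \<in> - closure S"
    using assms(2) by auto
  moreover have "0 = f y" if "y \<in> - closure S" for y
    using assms(1)[of y] that closure_subset by auto
  ultimately have "(f has_derivative (\<lambda>_. 0)) (at x)"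
    by (rule has_derivative_transform_within_open[OF has_derivative_const])
  from frechet_derivative_at[OF this] show ?thesis
    by simp
qed

lemma bounded_range_if_vanishes_outside_bounded:
  fixes g :: "'a::heine_borel \<Rightarrow> 'b::real_normed_vector"
  assumes "continuous_on UNIV g" "bounded S" "\<And>x. x \<notin> S \<Longrightarrow> g x = 0"
  shows "bounded (range g)"
proof -
  have "compact (g ` closure S)"
    using assms by (intro compact_continuous_image continuous_on_subset[OF assms(1)]) auto
  moreover have "range g \<subseteq> insert 0 (g ` closure S)"
    using assms(3) closure_subset by fastforce
  ultimately show ?thesis
    by (meson bounded_insert bounded_subset compact_imp_bounded)
qed

lemma hnorm_nonneg: "0 \<le> hnorm p"
  by (cases p) (simp add: hnorm_def)

lemma hnorm_pow4: "hnorm (x, y, t) ^ 4 = (norm x ^ 2 + norm y ^ 2) ^ 2 + t ^ 2"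
proof -
  have "(X powr (1/4)) ^ 4 = X" if "0 \<le> X" for X :: real
    using that by (cases "X = 0") (simp_all add: powr_power)
  then show ?thesis
    by (simp add: hnorm_def)
qed

lemma bounded_hball: "bounded (hball R :: 'n::finite heis set)"
proof -
  have "norm p \<le> sqrt (R\<^sup>2 + (R\<^sup>2)\<^sup>2)" if "p \<in> hball R" for p :: "'n heis"
  proof -
    obtain x y t where p: "p = (x, y, t)" by (cases p)
    have "hnorm p < R" "0 \<le> hnorm p"
      using that hnorm_nonneg[of p] by (auto simp: hball_def)
    then have "hnorm p ^ 4 \<le> R ^ 4"
      by (intro power_mono) auto
    then have H: "(norm x ^ 2 + norm y ^ 2) ^ 2 + t ^ 2 \<le> (R\<^sup>2)\<^sup>2"
      by (simp add: p hnorm_pow4)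
    have "(norm x ^ 2 + norm y ^ 2) ^ 2 \<le> (R\<^sup>2)\<^sup>2" "t\<^sup>2 \<le> (R\<^sup>2)\<^sup>2"
      using H zero_le_power2[of t] zero_le_power2[of "norm x ^ 2 + norm y ^ 2"] by linarith+
    then have "norm x ^ 2 + norm y ^ 2 \<le> R\<^sup>2" "t\<^sup>2 \<le> (R\<^sup>2)\<^sup>2"
      by (auto intro: power2_le_imp_le)
    then show ?thesis
      by (simp add: p norm_Pair real_le_rsqrt)
  qed
  then show ?thesis
    by (rule boundedI)
qed

lemma hX_eq_frechet_derivative: "hX j u p = frechet_derivative u (at p) (axis j 1, 0, 2 * fst (snd p) $ j)"
  by (cases p) (simp add: hX_def)

lemma hY_eq_frechet_derivative: "hY j u p = frechet_derivative u (at p) (0, axis j 1, - 2 * fst p $ j)"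
  by (cases p) (simp add: hY_def)

lemma hgrad_norm_nonneg: "0 \<le> hgrad_norm u p"
  by (simp add: hgrad_norm_def sum_nonneg)

lemma continuous_on_hgrad_norm:
  assumes "\<And>p. u differentiable (at p)"
    and "\<And>v. continuous_on UNIV (\<lambda>p. frechet_derivative u (at p) v)"
  shows "continuous_on UNIV (hgrad_norm u)"
proof -
  have "continuous_on UNIV (\<lambda>p. frechet_derivative u (at p) (axis j 1, 0, 2 * fst (snd p) $ j))"
    and "continuous_on UNIV (\<lambda>p. frechet_derivative u (at p) (0, axis j 1, - 2 * fst p $ j))" for j
    by (rule continuous_on_frechet_derivative_apply[OF assms]; intro continuous_intros)+
  then show ?thesis
    unfolding hgrad_norm_def[abs_def] hX_eq_frechet_derivative hY_eq_frechet_derivative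
    by (intro continuous_on_real_sqrt continuous_on_sum continuous_on_add continuous_on_power)
qed

lemma hgrad_norm_bounded_if_bounded_support:
  assumes "\<And>p. u differentiable (at p)"
    and "\<And>v. continuous_on UNIV (\<lambda>p. frechet_derivative u (at p) v)"
    and "bounded S" "\<And>p. p \<notin> S \<Longrightarrow> u p = 0"
  shows "\<exists>B. \<forall>p. hgrad_norm u p \<le> B"
proof -
  have "hgrad_norm u p = 0" if "p \<notin> closure S" for p
    using frechet_derivative_eq_0_outside_closure[OF assms(4) that]
    by (simp add: hgrad_norm_def hX_eq_frechet_derivative hY_eq_frechet_derivative)
  then have "bounded (range (hgrad_norm u))"
    using assms
    by (intro bounded_range_if_vanishes_outside_bounded[where S = "closure S"]
        continuous_on_hgrad_norm) auto
  then obtain B where "\<forall>p. \<bar>hgrad_norm u p\<bar> \<le> B"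
    by (auto simp: bounded_iff)
  then show ?thesis
    by (meson abs_le_D1)
qed

definition hgrad :: "('n::finite heis \<Rightarrow> real) \<Rightarrow> 'n heis \<Rightarrow> (real^'n) \<times> (real^'n)" where
  "hgrad u p = ((\<chi> j. hX j u p), (\<chi> j. hY j u p))"

lemma hgrad_norm_eq_norm_hgrad: "hgrad_norm u p = norm (hgrad u p)"
  by (simp add: hgrad_norm_def hgrad_def norm_Pair norm_vec_def L2_set_def sum.distrib sum_nonneg)

lemma hgrad_eq_derivative:
  assumes "(u has_derivative u') (at (x, y, t))"
  shows "hgrad u (x, y, t) = ((\<chi> j. u' (axis j 1, 0, 2 * y $ j)), (\<chi> j. u' (0, axis j 1, - 2 * x $ j)))"
  using frechet_derivative_at[OF assms] by (simp add: hgrad_def hX_def hY_def)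

lemma hgrad_mult:
  assumes "f differentiable (at p)" "g differentiable (at p)"
  shows "hgrad (\<lambda>q. f q * g q) p = f p *\<^sub>R hgrad g p + g p *\<^sub>R hgrad f p"
proof -
  obtain f' g' where f': "(f has_derivative f') (at p)" and g': "(g has_derivative g') (at p)"
    using assms unfolding differentiable_def by blast
  obtain x y t where p: "p = (x, y, t)" by (cases p)
  show ?thesis
    using has_derivative_mult[OF f' g'] f' g'
    unfolding p by (simp add: hgrad_eq_derivative vec_eq_iff algebra_simps)
qed

lemma hgrad_norm_mult_le:
  assumes "f differentiable (at p)" "g differentiable (at p)"
  shows "hgrad_norm (\<lambda>q. f q * g q) p \<le> \<bar>f p\<bar> * hgrad_norm g p + \<bar>g p\<bar> * hgrad_norm f p"
  unfolding hgrad_norm_eq_norm_hgrad hgrad_mult[OF assms]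
  by (metis norm_scaleR norm_triangle_ineq)

lemma hgrad_comp:
  assumes "f differentiable (at p)" "(g has_real_derivative g') (at (f p))"
  shows "hgrad (\<lambda>q. g (f q)) p = g' *\<^sub>R hgrad f p"
proof -
  obtain f' where f': "(f has_derivative f') (at p)"
    using assms unfolding differentiable_def by blast
  have "((\<lambda>q. g (f q)) has_derivative (\<lambda>h. g' * f' h)) (at p)"
    using has_derivative_compose[OF f' assms(2)[unfolded has_field_derivative_def]] by simp
  moreover obtain x y t where p: "p = (x, y, t)" by (cases p)
  ultimately show ?thesis
    using f' by (simp add: hgrad_eq_derivative vec_eq_iff)
qed

lemma hgrad_norm_comp:
  assumes "f differentiable (at p)" "(g has_real_derivative g') (at (f p))"
  shows "hgrad_norm (\<lambda>q. g (f q)) p = \<bar>g'\<bar> * hgrad_norm f p"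
  by (simp add: hgrad_norm_eq_norm_hgrad hgrad_comp[OF assms])

lemma hgrad_norm_cmult:
  assumes "f differentiable (at p)"
  shows "hgrad_norm (\<lambda>q. c * f q) p = \<bar>c\<bar> * hgrad_norm f p"
  by (rule hgrad_norm_comp[OF assms]) (auto intro!: derivative_eq_intros)

(* Stated with projections instead of a case split on q = (x, y, t), so that
   derivative_eq_intros applies directly. *)
definition bubble_denom :: "real \<Rightarrow> real \<Rightarrow> 'n::finite heis \<Rightarrow> real" where
  "bubble_denom l e q = l ^ 4 * (snd (snd q))\<^sup>2
     + (e\<^sup>2 + l\<^sup>2 * (fst q \<bullet> fst q + fst (snd q) \<bullet> fst (snd q)))\<^sup>2"

lemma bubble_denom_pos:
  assumes "e \<noteq> 0"
  shows "0 < bubble_denom l e q"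
proof -
  have "0 < e\<^sup>2 + l\<^sup>2 * (fst q \<bullet> fst q + fst (snd q) \<bullet> fst (snd q))"
    using assms by (intro add_pos_nonneg) auto
  then show ?thesis
    by (simp add: bubble_denom_def add_nonneg_pos)
qed

lemma U_eps_eq_bubble_denom:
  fixes q :: "'n::finite heis" and s c :: real
  assumes e: "e > 0"
  defines "l \<equiv> sobolev_const TYPE('n) s powr (- 1 / (2 * s))"
    and "a \<equiv> (hQ TYPE('n) - 2 * s) / 2"
    and "L \<equiv> Lp_norm (crit_exp TYPE('n) s) (bubble_U c s :: 'n heis \<Rightarrow> real)"
  shows "U_eps c s e q = c / L * e powr a * bubble_denom l e q powr (- a / 2)"
proof -
  obtain x y t where q: "q = (x, y, t)" by (cases q)
  define D where "D = bubble_denom l e q"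
  have exps: "- (hQ TYPE('n) - 2 * s) / 4 = - a / 2" "- (hQ TYPE('n) - 2 * s) / 2 = - a"
    by (simp_all add: a_def field_simps)
  have dil: "hdil l (hdil (1 / e) q)
      = (l *\<^sub>R (1 / e) *\<^sub>R x, l *\<^sub>R (1 / e) *\<^sub>R y, l\<^sup>2 * ((1 / e)\<^sup>2 * t))"
    by (simp add: hdil_def q)
  have norm_dil: "(norm (l *\<^sub>R (1 / e) *\<^sub>R v))\<^sup>2 = (l / e)\<^sup>2 * (v \<bullet> v)" for v :: "real^'n"
    by (simp add: power_mult_distrib power_divide flip: power2_norm_eq_inner)
  have g: "(l\<^sup>2 * ((1 / e)\<^sup>2 * t))\<^sup>2 + (1 + (l / e)\<^sup>2 * A + (l / e)\<^sup>2 * B)\<^sup>2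
      = (l ^ 4 * t\<^sup>2 + (e\<^sup>2 + l\<^sup>2 * (A + B))\<^sup>2) / e ^ 4" for A B
    using e by (simp add: power_divide field_simps)
  have base: "(l\<^sup>2 * ((1 / e)\<^sup>2 * t))\<^sup>2
      + (1 + (norm (l *\<^sub>R (1 / e) *\<^sub>R x))\<^sup>2 + (norm (l *\<^sub>R (1 / e) *\<^sub>R y))\<^sup>2)\<^sup>2 = D / e ^ 4"
    unfolding norm_dil g by (simp add: D_def bubble_denom_def q)
  have "U_eps c s e q = e powr (- a) * (c * (D / e ^ 4) powr (- a / 2) / L)"
    unfolding U_eps_def u_star_def u_bar_def l_def[symmetric] L_def[symmetric] dil bubble_U_def
      exps base[symmetric]
    by simp
  also have "(D / e ^ 4) powr (- a / 2) = D powr (- a / 2) / e powr (- 2 * a)"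
    using e powr_powr[of e 4 "- a / 2"] by (simp add: powr_divide)
  also have "e powr (- a) * (c * (D powr (- a / 2) / e powr (- 2 * a)) / L)
      = c / L * (e powr (- a) / e powr (- 2 * a)) * D powr (- a / 2)"
    by (simp add: field_simps)
  also have "e powr (- a) / e powr (- 2 * a) = e powr a"
    using e by (simp flip: powr_diff)
  finally show ?thesis
    by (simp add: D_def)
qed

lemma bubble_denom_ge_hnorm: "(l * hnorm q) ^ 4 \<le> bubble_denom l e q"
proof -
  obtain x y t where q: "q = (x, y, t)" by (cases q)
  define R where "R = x \<bullet> x + y \<bullet> y"
  have "(l\<^sup>2 * R)\<^sup>2 \<le> (e\<^sup>2 + l\<^sup>2 * R)\<^sup>2"
    by (intro power_mono) (auto simp: R_def)
  then show ?thesis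
    by (simp add: q hnorm_pow4 power_mult_distrib bubble_denom_def power2_norm_eq_inner
        R_def[symmetric] algebra_simps)
qed

lemma has_derivative_bubble_denom:
  "(bubble_denom l e has_derivative
     (\<lambda>(hx, hy, ht). 2 * l ^ 4 * t * ht + 2 * (e\<^sup>2 + l\<^sup>2 * (x \<bullet> x + y \<bullet> y)) * l\<^sup>2 * (2 * (x \<bullet> hx) + 2 * (y \<bullet> hy))))
     (at (x, y, t))"
  unfolding bubble_denom_def[abs_def]
  by (auto intro!: derivative_eq_intros simp: algebra_simps inner_commute)

lemma differentiable_bubble_denom: "bubble_denom l e differentiable (at p)"
proof -
  obtain x y t where "p = (x, y, t)" by (cases p)
  then show ?thesis
    by (auto intro: differentiableI[OF has_derivative_bubble_denom])
qed

(* The cross terms cancel: with E = e^2 + l^2 |z|^2 the horizontal gradient of l^4 t^2 + E^2 is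
   4 l^2 (E x + l^2 t y, E y - l^2 t x). *)
lemma hgrad_norm_bubble_denom:
  "hgrad_norm (bubble_denom l e) (x, y, t) = 4 * l\<^sup>2 * sqrt (bubble_denom l e (x, y, t) * (norm x ^ 2 + norm y ^ 2))"
proof -
  define E where "E = e\<^sup>2 + l\<^sup>2 * (x \<bullet> x + y \<bullet> y)"
  define T where "T = l\<^sup>2 * t"
  define P where "P = (E *\<^sub>R x + T *\<^sub>R y, E *\<^sub>R y - T *\<^sub>R x)"
  have "hgrad (bubble_denom l e) (x, y, t) = (4 * l\<^sup>2) *\<^sub>R P"
    by (simp add: hgrad_eq_derivative[OF has_derivative_bubble_denom] vec_eq_iff inner_axis
        P_def E_def T_def algebra_simps)
  moreover have "(norm P)\<^sup>2 = (T\<^sup>2 + E\<^sup>2) * (norm x ^ 2 + norm y ^ 2)"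
    unfolding P_def power2_norm_eq_inner
    by (simp add: inner_commute power2_eq_square algebra_simps)
  moreover have "T\<^sup>2 + E\<^sup>2 = bubble_denom l e (x, y, t)"
    by (simp add: bubble_denom_def E_def T_def power_mult_distrib)
  ultimately show ?thesis
    unfolding hgrad_norm_eq_norm_hgrad by (simp add: real_sqrt_unique)
qed

lemma hgrad_norm_bubble_denom_le:
  "hgrad_norm (bubble_denom l e) p \<le> 4 * \<bar>l\<bar> * bubble_denom l e p powr (3 / 4)"
proof -
  obtain x y t where p: "p = (x, y, t)" by (cases p)
  define R where "R = norm x ^ 2 + norm y ^ 2"
  define D where "D = bubble_denom l e p"
  have "D \<ge> 0" "R \<ge> 0"
    by (simp_all add: D_def bubble_denom_def R_def)
  have "(l\<^sup>2 * R)\<^sup>2 \<le> (e\<^sup>2 + l\<^sup>2 * R)\<^sup>2"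
    using \<open>R \<ge> 0\<close> by (intro power_mono) auto
  also have "\<dots> \<le> D"
    by (simp add: D_def bubble_denom_def p R_def power2_norm_eq_inner)
  finally have "l\<^sup>2 * R \<le> sqrt D"
    by (rule real_le_rsqrt)
  have "hgrad_norm (bubble_denom l e) p = 4 * \<bar>l\<bar> * sqrt (D * (l\<^sup>2 * R))"
    by (simp add: hgrad_norm_bubble_denom p D_def R_def real_sqrt_mult power2_eq_square)
  also have "\<dots> \<le> 4 * \<bar>l\<bar> * sqrt (D * sqrt D)"
    using \<open>l\<^sup>2 * R \<le> sqrt D\<close> \<open>D \<ge> 0\<close> by (intro mult_left_mono real_sqrt_le_mono) auto
  also have "sqrt (D * sqrt D) = D powr (3 / 4)"
    using \<open>D \<ge> 0\<close>
    by (cases "D = 0") (simp_all add: powr_half_sqrt[symmetric] powr_mult_base powr_powr)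
  finally show ?thesis
    by (simp add: D_def)
qed

lemma bubble_profile_bounds:
  assumes l: "l > 0" and e: "e \<noteq> 0" and a: "a > 0" and \<rho>: "0 < \<rho>" "\<rho> < hnorm p"
  shows "bubble_denom l e p powr (- a / 2) \<le> (l * \<rho>) powr (- 2 * a)"
    and "hgrad_norm (\<lambda>q. bubble_denom l e q powr (- a / 2)) p \<le> 2 * a / \<rho> * (l * \<rho>) powr (- 2 * a)"
proof -
  define D where "D = bubble_denom l e p"
  have "0 < l * \<rho>"
    using l \<rho> by simp
  have "(l * \<rho>) ^ 4 < (l * hnorm p) ^ 4"
    using l \<rho> by (intro power_strict_mono) auto
  then have "(l * \<rho>) powr 4 < D"
    using bubble_denom_ge_hnorm[of l p e] \<open>0 < l * \<rho>\<close> by (simp add: D_def)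
  have D_le: "D powr (- b) \<le> (l * \<rho>) powr (- 4 * b)" if "b \<ge> 0" for b
  proof -
    have "D powr (- b) \<le> ((l * \<rho>) powr 4) powr (- b)"
      using that \<open>(l * \<rho>) powr 4 < D\<close> \<open>0 < l * \<rho>\<close> by (intro powr_mono2') auto
    then show ?thesis
      unfolding powr_powr by simp
  qed
  show "D powr (- a / 2) \<le> (l * \<rho>) powr (- 2 * a)"
    using D_le[of "a / 2"] a by simp
  have "D > 0"
    using e by (simp add: D_def bubble_denom_pos)
  have deriv: "((\<lambda>y. y powr (- a / 2)) has_real_derivative (- a / 2) * D powr (- a / 2 - 1)) (at D)"
    using \<open>D > 0\<close> by (rule has_real_derivative_powr)
  have D_pow: "D powr (- a / 2 - 1) * D powr (3 / 4) = D powr (- (a / 2 + 1 / 4))"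
    by (simp add: algebra_simps flip: powr_add)
  have l\<rho>_pow: "(l * \<rho>) powr (- 2 * a - 1) = (l * \<rho>) powr (- 2 * a) / (l * \<rho>)"
    using \<open>0 < l * \<rho>\<close> by (simp add: powr_diff)
  have "hgrad_norm (\<lambda>q. bubble_denom l e q powr (- a / 2)) p
      = \<bar>(- a / 2) * D powr (- a / 2 - 1)\<bar> * hgrad_norm (bubble_denom l e) p"
    unfolding D_def by (rule hgrad_norm_comp[OF differentiable_bubble_denom deriv[unfolded D_def]])
  also have "\<dots> = a / 2 * D powr (- a / 2 - 1) * hgrad_norm (bubble_denom l e) p"
    using a by (simp add: abs_mult)
  also have "\<dots> \<le> a / 2 * D powr (- a / 2 - 1) * (4 * l * D powr (3 / 4))"
    using hgrad_norm_bubble_denom_le[of l e p] a l by (intro mult_left_mono) (auto simp: D_def)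
  also have "\<dots> = 2 * a * l * D powr (- (a / 2 + 1 / 4))"
    unfolding D_pow[symmetric] by (simp add: algebra_simps)
  also have "\<dots> \<le> 2 * a * l * (l * \<rho>) powr (- 2 * a - 1)"
    using D_le[of "a / 2 + 1 / 4"] a l by (intro mult_left_mono) (auto simp: left_diff_distrib)
  also have "\<dots> = 2 * a / \<rho> * (l * \<rho>) powr (- 2 * a)"
    unfolding l\<rho>_pow using l by simp
  finally show "hgrad_norm (\<lambda>q. bubble_denom l e q powr (- a / 2)) p \<le> 2 * a / \<rho> * (l * \<rho>) powr (- 2 * a)" .
qed

lemma differentiable_bubble_profile:
  assumes "e \<noteq> 0"
  shows "(\<lambda>q. bubble_denom l e q powr b) differentiable (at p)"
proof (rule differentiable_compose[OF _ differentiable_bubble_denom])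
  have "((\<lambda>y. y powr b) has_real_derivative b * bubble_denom l e p powr (b - 1))
      (at (bubble_denom l e p))"
    using bubble_denom_pos[OF assms] by (rule has_real_derivative_powr)
  then show "(\<lambda>y. y powr b) differentiable (at (bubble_denom l e p))"
    by (auto simp: has_field_derivative_def differentiable_def)
qed

lemma hgrad_norm_bubble_profile_mult_le:
  fixes p :: "'n::finite heis"
  assumes l: "l > 0" and e: "e \<noteq> 0" and a: "a > 0" and \<rho>: "0 < \<rho>" "\<rho> < hnorm p"
    and \<phi>: "\<phi> differentiable (at p)" "\<bar>\<phi> p\<bar> \<le> 1" "hgrad_norm \<phi> p \<le> B"
  shows "hgrad_norm (\<lambda>q. c * bubble_denom l e q powr (- a / 2) * \<phi> q) p
           \<le> \<bar>c\<bar> * (l * \<rho>) powr (- 2 * a) * (B + 2 * a / \<rho>)"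
proof -
  define F where "F q = c * bubble_denom l e q powr (- a / 2)" for q :: "'n heis"
  have F_diff: "F differentiable (at p)"
    using e by (simp add: F_def[abs_def] differentiable_bubble_profile)
  have F_le: "\<bar>F p\<bar> \<le> \<bar>c\<bar> * (l * \<rho>) powr (- 2 * a)"
    using bubble_profile_bounds(1)[OF l e a \<rho>] by (simp add: F_def abs_mult mult_left_mono)
  have "hgrad_norm F p = \<bar>c\<bar> * hgrad_norm (\<lambda>q. bubble_denom l e q powr (- a / 2)) p"
    unfolding F_def[abs_def] by (rule hgrad_norm_cmult[OF differentiable_bubble_profile[OF e]])
  also have "\<dots> \<le> \<bar>c\<bar> * (2 * a / \<rho> * (l * \<rho>) powr (- 2 * a))"
    using bubble_profile_bounds(2)[OF l e a \<rho>] by (rule mult_left_mono) simp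
  finally have hgrad_F_le: "hgrad_norm F p \<le> \<bar>c\<bar> * (2 * a / \<rho> * (l * \<rho>) powr (- 2 * a))" .
  have "hgrad_norm (\<lambda>q. F q * \<phi> q) p \<le> \<bar>F p\<bar> * hgrad_norm \<phi> p + \<bar>\<phi> p\<bar> * hgrad_norm F p"
    by (rule hgrad_norm_mult_le[OF F_diff \<phi>(1)])
  also have "\<dots> \<le> \<bar>c\<bar> * (l * \<rho>) powr (- 2 * a) * B + 1 * (\<bar>c\<bar> * (2 * a / \<rho> * (l * \<rho>) powr (- 2 * a)))"
    by (rule add_mono; rule mult_mono)
      (use F_le hgrad_F_le \<phi>(2,3) hgrad_norm_nonneg[of \<phi> p] hgrad_norm_nonneg[of F p] in auto)
  also have "\<dots> = \<bar>c\<bar> * (l * \<rho>) powr (- 2 * a) * (B + 2 * a / \<rho>)"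
    by (simp add: algebra_simps)
  finally show ?thesis
    by (simp add: F_def)
qed

theorem lemma3p8:
  fixes s C0 r \<rho> :: real
    and \<Omega> :: "'n::finite heis set"
    and \<phi> :: "'n heis \<Rightarrow> real"
  assumes s: "0 < s" "s < 1"
    and SPos: "sobolev_const TYPE('n) s > 0"
    and C0: "C0 > 0"
    and \<Omega>: "open \<Omega>" "bounded \<Omega>"
    and r: "r > 0" "hball (4 * r) \<subseteq> \<Omega>"
    and \<phi>_smooth: "smooth_fun \<phi>"
    and \<phi>_range: "\<And>p. 0 \<le> \<phi> p \<and> \<phi> p \<le> 1"
    and \<phi>_one: "\<And>p. p \<in> hball r \<Longrightarrow> \<phi> p = 1"
    and \<phi>_zero: "\<And>p. p \<notin> hball (2 * r) \<Longrightarrow> \<phi> p = 0"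
    and \<rho>: "\<rho> > 0"
  shows "\<exists>C>0. \<forall>\<epsilon>>0. \<forall>p. hnorm p > \<rho> \<longrightarrow>
           hgrad_norm (\<lambda>q. U_eps C0 s \<epsilon> q * \<phi> q) p
             \<le> C * \<epsilon> powr ((hQ TYPE('n) - 2 * s) / 2)"
proof -
  define l where "l = sobolev_const TYPE('n) s powr (- 1 / (2 * s))"
  define a where "a = (hQ TYPE('n) - 2 * s) / 2"
  define K where "K = C0 / Lp_norm (crit_exp TYPE('n) s) (bubble_U C0 s :: 'n heis \<Rightarrow> real)"
  have "l > 0" "a > 0"
    using SPos s by (simp_all add: l_def a_def hQ_def)
  obtain B where B: "\<And>p. hgrad_norm \<phi> p \<le> B"
    using hgrad_norm_bounded_if_bounded_support[OF smooth_fun_differentiable[OF \<phi>_smooth]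
        smooth_fun_continuous_on_directional_derivative[OF \<phi>_smooth] bounded_hball \<phi>_zero]
    by blast
  define C where "C = \<bar>K\<bar> * (l * \<rho>) powr (- 2 * a) * (B + 2 * a / \<rho>) + 1"
  have "C > 0"
    using B[of 0] hgrad_norm_nonneg[of \<phi> 0] \<open>a > 0\<close> \<rho> by (simp add: C_def add_nonneg_pos)
  moreover have "hgrad_norm (\<lambda>q. U_eps C0 s \<epsilon> q * \<phi> q) p \<le> C * \<epsilon> powr a"
    if "\<epsilon> > 0" "hnorm p > \<rho>" for \<epsilon> p
  proof -
    have "U_eps C0 s \<epsilon> q = K * \<epsilon> powr a * bubble_denom l \<epsilon> q powr (- a / 2)" for q :: "'n heis"
      using U_eps_eq_bubble_denom[OF \<open>\<epsilon> > 0\<close>, where s = s and c = C0 and q = q]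
      by (simp add: K_def l_def a_def)
    then have "hgrad_norm (\<lambda>q. U_eps C0 s \<epsilon> q * \<phi> q) p
        \<le> \<bar>K * \<epsilon> powr a\<bar> * (l * \<rho>) powr (- 2 * a) * (B + 2 * a / \<rho>)"
      using hgrad_norm_bubble_profile_mult_le[OF \<open>l > 0\<close> _ \<open>a > 0\<close> \<rho> \<open>hnorm p > \<rho>\<close>
          smooth_fun_differentiable[OF \<phi>_smooth] _ B, of \<epsilon>] \<phi>_range[of p] \<open>\<epsilon> > 0\<close>
      by simp
    also have "\<dots> \<le> C * \<epsilon> powr a"
      by (simp add: C_def abs_mult algebra_simps)
    finally show ?thesis .
  qed
  ultimately show ?thesis
    unfolding a_def by blast
qed

end
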